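(* Every $\frac{\kappa+1}{\kappa}$-APLS for the maximum matching problem on graphs of odd-girth at least $2\kappa+1$ has proof size $\Omega(\log\kappa)$.
   Context: All graphs are finite, connected and undirected, $G=(V,E)$, $N(v)$ is the set of neighbors of $v$; each node distinguishes its incident edges by port numbers. An input assignment $\mathsf{I}:V\to\{0,1\}^*$ and an output assignment $\mathsf{O}:V\to\{0,1\}^*$ give each node a local input and a local output; an IO graph $\langle G,\mathsf I,\mathsf O\rangle$ is a configuration graph with $S(v)=\mathsf I(v)\cdot\mathsf O(v)$. Given a universe $\mathcal U$ of configuration graphs and disjoint families $\mathcal F_Y,\mathcal F_N\subseteq\mathcal U$, a gap proof labeling scheme (GPLS) consists of a prover which, given a configuration graph in $\mathcal F_Y$, assigns a label $L(v)\in\{0,1\}^*$ to every node, and a verifier which at each node $v$ receives only $\langle S(v),L(v),L^N(v)\rangle$, where $L^N(v)$ is the vector of labels of $v$'s neighbors (indexed by port), and outputs True or False; the verifier accepts if all nodes output True and rejects otherwise. The GPLS is correct if (i) for every configuration graph in $\mathcal F_Y$ the verifier accepts under the prover's labels, and (ii) for every configuration graph in $\mathcal F_N$ the verifier rejects under every label assignment. Its proof size is the maximum label length assigned by the prover over configuration graphs in $\mathcal F_Y$. For an optimization problem $\Psi=\langle\Pi,f\rangle$ ($\Pi$ a set of IO graphs = feasible solutions, $f$ integer objective, $OPT_\Psi(G,\mathsf I)$ the optimum over feasible $\mathsf O$) and $\alpha\ge1$, an $\alpha$-APLS is a GPLS over $\mathcal U=\{\langle G,\mathsf I,\mathsf O\rangle:\langle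 G,\mathsf I\rangle\text{ admits a feasible solution}\}$ with $\mathcal F_Y$ the IO graphs in $\Pi$ with $f=OPT_\Psi$, and $\mathcal F_N$ equal to $\mathcal U$ minus the IO graphs in $\Pi$ with $f\ge OPT_\Psi/\alpha$ (for a maximization problem). Restricting to a graph family means the universe contains only IO graphs whose underlying graph lies in the family. Maximum matching: the output encodes a set $M\subseteq E$ (each node knows which incident edge, if any, is in $M$); feasible iff $M$ is a matching; $f=|M|$ is maximized. The odd-girth of a graph is the length of its shortest odd cycle ($\infty$ if none). *)

theory Defs
  imports Complex_Main
begin

text \<open>A graph is given by a finite vertex set V of naturals and, for each node v,
  the list nb v of its neighbours in port order (port p of v leads to nb v ! p).\<close>

definition graph_edges :: "nat set \<Rightarrow> (nat \<Rightarrow> nat list) \<Rightarrow> nat set set" where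
  "graph_edges V nb = {{u, v} | u v. u \<in> V \<and> v \<in> set (nb u)}"

definition adj :: "(nat \<Rightarrow> nat list) \<Rightarrow> nat \<Rightarrow> nat \<Rightarrow> bool" where
  "adj nb u v \<longleftrightarrow> v \<in> set (nb u)"

definition port_graph :: "nat set \<Rightarrow> (nat \<Rightarrow> nat list) \<Rightarrow> bool" where
  "port_graph V nb \<longleftrightarrow>
     finite V \<and> V \<noteq> {} \<and>
     (\<forall>v\<in>V. distinct (nb v) \<and> set (nb v) \<subseteq> V \<and> v \<notin> set (nb v)) \<and>
     (\<forall>v\<in>V. \<forall>u\<in>set (nb v). v \<in> set (nb u)) \<and>
     (\<forall>u\<in>V. \<forall>v\<in>V. (u, v) \<in> {(x, y). x \<in> V \<and> adj nb x y}\<^sup>*)"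

definition is_cycle :: "nat set \<Rightarrow> (nat \<Rightarrow> nat list) \<Rightarrow> nat list \<Rightarrow> bool" where
  "is_cycle V nb cs \<longleftrightarrow>
     length cs \<ge> 3 \<and> distinct cs \<and> set cs \<subseteq> V \<and>
     (\<forall>i < length cs - 1. adj nb (cs ! i) (cs ! Suc i)) \<and>
     adj nb (last cs) (hd cs)"

text \<open>odd-girth \<ge> g: every odd cycle has length at least g (vacuous if there is none,
  matching odd-girth = \<infinity>).\<close>

definition odd_girth_at_least :: "nat set \<Rightarrow> (nat \<Rightarrow> nat list) \<Rightarrow> nat \<Rightarrow> bool" where
  "odd_girth_at_least V nb g \<longleftrightarrow>
     (\<forall>cs. is_cycle V nb cs \<and> odd (length cs) \<longrightarrow> length cs \<ge> g)"

definition is_matching :: "nat set \<Rightarrow> (nat \<Rightarrow> nat list) \<Rightarrow> nat set set \<Rightarrow> bool" where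
  "is_matching V nb M \<longleftrightarrow>
     M \<subseteq> graph_edges V nb \<and> (\<forall>e\<in>M. \<forall>e'\<in>M. e \<noteq> e' \<longrightarrow> e \<inter> e' = {})"

text \<open>Output of a node: None (unmatched) or Some p, the port of its incident matching edge.\<close>

definition encodes :: "nat set \<Rightarrow> (nat \<Rightarrow> nat list) \<Rightarrow> (nat \<Rightarrow> nat option) \<Rightarrow> nat set set \<Rightarrow> bool" where
  "encodes V nb out M \<longleftrightarrow>
     M \<subseteq> graph_edges V nb \<and>
     (\<forall>v\<in>V. case out v of
        None \<Rightarrow> (\<forall>e\<in>M. v \<notin> e)
      | Some p \<Rightarrow> p < length (nb v) \<and> {v, nb v ! p} \<in> M)"

definition feasible_matching :: "nat set \<Rightarrow> (nat \<Rightarrow> nat list) \<Rightarrow> (nat \<Rightarrow> nat option) \<Rightarrow> bool" where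
  "feasible_matching V nb out \<longleftrightarrow> (\<exists>M. encodes V nb out M \<and> is_matching V nb M)"

definition matching_value :: "nat set \<Rightarrow> (nat \<Rightarrow> nat list) \<Rightarrow> (nat \<Rightarrow> nat option) \<Rightarrow> nat" where
  "matching_value V nb out = card {{v, nb v ! p} | v p. v \<in> V \<and> out v = Some p}"

definition opt_matching :: "nat set \<Rightarrow> (nat \<Rightarrow> nat list) \<Rightarrow> nat" where
  "opt_matching V nb = Max {card M | M. is_matching V nb M}"

text \<open>Universe for parameter \<kappa>: IO graphs whose underlying graph has odd-girth \<ge> 2\<kappa>+1
  (every graph admits the empty matching, so no further restriction).\<close>

definition in_universe :: "nat \<Rightarrow> nat set \<Rightarrow> (nat \<Rightarrow> nat list) \<Rightarrow> bool" where
  "in_universe \<kappa> V nb \<longleftrightarrow> port_graph V nb \<and> odd_girth_at_least V nb (2 * \<kappa> + 1)"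

definition yes_instance :: "nat \<Rightarrow> nat set \<Rightarrow> (nat \<Rightarrow> nat list) \<Rightarrow> (nat \<Rightarrow> nat option) \<Rightarrow> bool" where
  "yes_instance \<kappa> V nb out \<longleftrightarrow>
     in_universe \<kappa> V nb \<and> feasible_matching V nb out \<and>
     matching_value V nb out = opt_matching V nb"

definition no_instance :: "nat \<Rightarrow> nat set \<Rightarrow> (nat \<Rightarrow> nat list) \<Rightarrow> (nat \<Rightarrow> nat option) \<Rightarrow> bool" where
  "no_instance \<kappa> V nb out \<longleftrightarrow>
     in_universe \<kappa> V nb \<and>
     \<not> (feasible_matching V nb out \<and>
        real (matching_value V nb out) \<ge> real (opt_matching V nb) / ((real \<kappa> + 1) / real \<kappa>))"

text \<open>The verifier at v sees only the state S(v) (here: its output), its own label and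
  the labels of its neighbours in port order.\<close>

definition verifier_accepts ::
  "(nat option \<Rightarrow> bool list \<Rightarrow> bool list list \<Rightarrow> bool) \<Rightarrow> nat set \<Rightarrow> (nat \<Rightarrow> nat list) \<Rightarrow>
   (nat \<Rightarrow> nat option) \<Rightarrow> (nat \<Rightarrow> bool list) \<Rightarrow> bool" where
  "verifier_accepts D V nb out L \<longleftrightarrow> (\<forall>v\<in>V. D (out v) (L v) (map L (nb v)))"

definition is_APLS ::
  "nat \<Rightarrow> (nat set \<Rightarrow> (nat \<Rightarrow> nat list) \<Rightarrow> (nat \<Rightarrow> nat option) \<Rightarrow> nat \<Rightarrow> bool list) \<Rightarrow>
   (nat option \<Rightarrow> bool list \<Rightarrow> bool list list \<Rightarrow> bool) \<Rightarrow> bool" where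
  "is_APLS \<kappa> P D \<longleftrightarrow>
     (\<forall>V nb out. yes_instance \<kappa> V nb out \<longrightarrow> verifier_accepts D V nb out (P V nb out)) \<and>
     (\<forall>V nb out. no_instance \<kappa> V nb out \<longrightarrow> (\<forall>L. \<not> verifier_accepts D V nb out L))"

end

theory Submission
  imports Defs
begin

text \<open>On the odd cycle of length 2\<kappa>+1 the matching {1,2}, {3,4}, ..., {2\<kappa>-1,2\<kappa>} is maximum,
  so the verifier accepts the prover's labels. If all labels have at most b bits and
  \<kappa> > 8 \<cdot> 4^b, two positions i < j of equal parity carry the same labels on (i, i+1) and
  (j, j+1); cutting out i+1..j gives a shorter odd cycle that is still accepted. Repeating this
  we reach an accepted odd cycle of length m \<le> \<kappa>. Its double cover, the even cycle of length
  2m with the lifted output and labels, is accepted as well, since every node sees what its image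
  saw. But the even cycle is bipartite, hence in the universe, and the lifted matching has
  m - 1 < m \<kappa> / (\<kappa> + 1) edges while a perfect matching has m: a no-instance. So
  \<kappa> \<le> 8 \<cdot> 4^b, i.e. b \<ge> ln \<kappa> / 5.\<close>

section \<open>Cycles as port-numbered graphs\<close>

definition cycle_pred :: "nat \<Rightarrow> nat \<Rightarrow> nat" where
  "cycle_pred N v = (v + (N - 1)) mod N"

definition cycle_succ :: "nat \<Rightarrow> nat \<Rightarrow> nat" where
  "cycle_succ N v = Suc v mod N"

definition cycle_nbrs :: "nat \<Rightarrow> nat \<Rightarrow> nat list" where
  "cycle_nbrs N v = [cycle_pred N v, cycle_succ N v]"

abbreviation accepts_on_cycle ::
  "(nat option \<Rightarrow> bool list \<Rightarrow> bool list list \<Rightarrow> bool) \<Rightarrow> nat \<Rightarrow> (nat \<Rightarrow> nat option) \<Rightarrow>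
   (nat \<Rightarrow> bool list) \<Rightarrow> bool" where
  "accepts_on_cycle D N out L \<equiv> verifier_accepts D {0..<N} (cycle_nbrs N) out L"

lemma cycle_pred_eq: "v < N \<Longrightarrow> cycle_pred N v = (if v = 0 then N - 1 else v - 1)"
  by (cases v) (auto simp: cycle_pred_def)

lemma cycle_succ_eq: "v < N \<Longrightarrow> cycle_succ N v = (if Suc v = N then 0 else Suc v)"
  by (auto simp: cycle_succ_def mod_Suc)

lemma cycle_pred_succ: "v < N \<Longrightarrow> cycle_pred N (cycle_succ N v) = v"
  by (auto simp: cycle_pred_eq cycle_succ_eq)

lemma cycle_succ_pred: "v < N \<Longrightarrow> cycle_succ N (cycle_pred N v) = v"
  by (auto simp: cycle_pred_eq cycle_succ_eq)

lemma adj_cycle_nbrs: "adj (cycle_nbrs N) x y \<longleftrightarrow> y = cycle_pred N x \<or> y = cycle_succ N x"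
  by (auto simp: adj_def cycle_nbrs_def)

lemma verifier_accepts_cycle:
  "accepts_on_cycle D N out L \<longleftrightarrow>
     (\<forall>v<N. D (out v) (L v) [L (cycle_pred N v), L (cycle_succ N v)])"
  by (auto simp: verifier_accepts_def cycle_nbrs_def)

lemma cycle_reachable:
  assumes "u < N"
  shows "(u, (u + k) mod N) \<in> {(x, y). x \<in> {0..<N} \<and> adj (cycle_nbrs N) x y}\<^sup>*"
proof (induction k)
  case (Suc k)
  have "cycle_succ N ((u + k) mod N) = (u + Suc k) mod N"
    by (simp add: cycle_succ_def mod_Suc_eq)
  then show ?case
    using Suc assms by (auto simp: adj_cycle_nbrs intro: rtrancl_into_rtrancl)
qed (simp add: assms)

lemma port_graph_cycle:
  assumes "3 \<le> N"
  shows "port_graph {0..<N} (cycle_nbrs N)"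
  unfolding port_graph_def
proof (intro conjI ballI)
  fix v assume "v \<in> {0..<N}"
  then show "distinct (cycle_nbrs N v)" "set (cycle_nbrs N v) \<subseteq> {0..<N}" "v \<notin> set (cycle_nbrs N v)"
    using assms by (auto simp: cycle_nbrs_def cycle_pred_eq cycle_succ_eq)
next
  fix v u assume "v \<in> {0..<N}" "u \<in> set (cycle_nbrs N v)"
  then show "v \<in> set (cycle_nbrs N u)"
    by (auto simp: cycle_nbrs_def cycle_pred_succ cycle_succ_pred)
next
  fix u v assume "u \<in> {0..<N}" "v \<in> {0..<N}"
  then show "(u, v) \<in> {(x, y). x \<in> {0..<N} \<and> adj (cycle_nbrs N) x y}\<^sup>*"
    using cycle_reachable[of u N "v + N - u"] by simp
qed (use assms in auto)

lemma is_cycle_even_if_two_coloured: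
  fixes col :: "nat \<Rightarrow> bool"
  assumes cyc: "is_cycle V nb cs"
    and col: "\<And>x y. x \<in> set cs \<Longrightarrow> y \<in> set cs \<Longrightarrow> adj nb x y \<Longrightarrow> col x \<noteq> col y"
  shows "even (length cs)"
proof -
  have len: "3 \<le> length cs" and step: "\<forall>i < length cs - 1. adj nb (cs ! i) (cs ! Suc i)"
    and close: "adj nb (last cs) (hd cs)"
    using cyc by (simp_all add: is_cycle_def)
  have alternate: "col (cs ! i) \<longleftrightarrow> (col (cs ! 0) \<longleftrightarrow> even i)" if "i < length cs" for i
    using that
  proof (induction i)
    case (Suc i)
    then show ?case using col[of "cs ! i" "cs ! Suc i"] step by auto
  qed simp
  have "col (cs ! (length cs - 1)) \<noteq> col (cs ! 0)"
  proof -
    have "cs \<noteq> []" using len by auto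
    then show ?thesis
      using col[OF last_in_set hd_in_set close] by (simp add: last_conv_nth hd_conv_nth)
  qed
  moreover have "length cs - 1 < length cs"
    using len by simp
  ultimately have "odd (length cs - 1)"
    using alternate by blast
  then show ?thesis
    using len by simp
qed

lemma odd_girth_even_cycle:
  assumes "even N"
  shows "odd_girth_at_least {0..<N} (cycle_nbrs N) g"
  unfolding odd_girth_at_least_def
proof (intro allI impI)
  fix cs assume cs: "is_cycle {0..<N} (cycle_nbrs N) cs \<and> odd (length cs)"
  have "even (length cs)"
  proof (rule is_cycle_even_if_two_coloured[of "{0..<N}" _ _ odd])
    fix x y assume "x \<in> set cs" "adj (cycle_nbrs N) x y"
    then have "x < N" "y = cycle_pred N x \<or> y = cycle_succ N x"
      using cs by (auto simp: is_cycle_def adj_cycle_nbrs)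
    then show "odd x \<noteq> odd y"
      using assms by (auto simp: cycle_pred_eq cycle_succ_eq; presburger)
  qed (use cs in simp)
  with cs show "g \<le> length cs" by simp
qed

lemma odd_girth_cycle: "odd_girth_at_least {0..<N} (cycle_nbrs N) N"
  unfolding odd_girth_at_least_def
proof (intro allI impI)
  fix cs assume cs: "is_cycle {0..<N} (cycle_nbrs N) cs \<and> odd (length cs)"
  have sub: "set cs \<subseteq> {0..<N}" and dis: "distinct cs"
    using cs by (simp_all add: is_cycle_def)
  show "N \<le> length cs"
  proof (rule ccontr)
    assume "\<not> N \<le> length cs"
    then have "set cs \<noteq> {0..<N}"
      using distinct_card[OF dis] by auto
    then obtain w where w: "w < N" "w \<notin> set cs"
      using sub by (metis atLeastLessThan_iff subsetI subset_antisym)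
    text \<open>Away from the missing vertex w the cycle is a path, two-coloured by the parity of
      the distance from w.\<close>
    define col where "col v = odd (if w < v then v - w - 1 else v + N - w - 1)" for v
    have succ_flips: "col (cycle_succ N x) \<noteq> col x" if "x \<in> set cs" "cycle_succ N x \<in> set cs" for x
    proof -
      have "x < N" "x \<noteq> w" "cycle_succ N x \<noteq> w"
        using that sub w by auto
      then show ?thesis
        using w by (auto simp: col_def cycle_succ_eq)
    qed
    have "even (length cs)"
    proof (rule is_cycle_even_if_two_coloured[of "{0..<N}" _ _ col])
      fix x y assume xy: "x \<in> set cs" "y \<in> set cs" "adj (cycle_nbrs N) x y"
      then consider "x = cycle_succ N y" | "y = cycle_succ N x"
        using sub by (auto simp: adj_cycle_nbrs cycle_succ_pred)
      then show "col x \<noteq> col y"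
        using succ_flips xy by metis
    qed (use cs in simp)
    with cs show False by simp
  qed
qed

section \<open>Matchings\<close>

lemma graph_edges_subset_Pow: "port_graph V nb \<Longrightarrow> graph_edges V nb \<subseteq> Pow V"
  by (auto simp: graph_edges_def port_graph_def)

lemma finite_graph_edges: "port_graph V nb \<Longrightarrow> finite (graph_edges V nb)"
  by (meson Pow_iff finite_Pow_iff finite_subset graph_edges_subset_Pow port_graph_def)

lemma finite_matching_cards:
  assumes "port_graph V nb"
  shows "finite {card M | M. is_matching V nb M}"
proof -
  have "{card M | M. is_matching V nb M} \<subseteq> card ` Pow (graph_edges V nb)"
    unfolding is_matching_def by blast
  then show ?thesis
    using finite_graph_edges[OF assms] by (meson finite_Pow_iff finite_imageI finite_subset)
qed

lemma card_le_opt_matching: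
  assumes "port_graph V nb" "is_matching V nb M"
  shows "card M \<le> opt_matching V nb"
  unfolding opt_matching_def using finite_matching_cards[OF assms(1)] assms(2) by (auto intro!: Max_ge)

lemma two_card_matching_le:
  assumes G: "port_graph V nb" and M: "is_matching V nb M"
  shows "2 * card M \<le> card V"
proof -
  have sub: "M \<subseteq> graph_edges V nb"
    using M by (simp add: is_matching_def)
  have card_edge: "card e = 2" if e: "e \<in> M" for e
  proof -
    obtain u v where "e = {u, v}" "u \<in> V" "v \<in> set (nb u)"
      using e sub unfolding graph_edges_def by auto
    moreover have "v \<noteq> u"
      using G calculation(2,3) by (auto simp: port_graph_def)
    ultimately show ?thesis by simp
  qed
  have "pairwise disjnt M"
    using M unfolding is_matching_def pairwise_def disjnt_def by blast
  then have "card (\<Union>M) = sum card M"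
  proof (rule card_Union_disjoint)
    show "finite e" if "e \<in> M" for e
      using card_edge[OF that] by (intro card_ge_0_finite) simp
  qed
  also have "\<dots> = 2 * card M"
    using card_edge by simp
  finally have "card (\<Union>M) = 2 * card M" .
  moreover have "\<Union>M \<subseteq> V"
    using sub graph_edges_subset_Pow[OF G] by blast
  ultimately show ?thesis
    using G card_mono by (metis port_graph_def)
qed

lemma two_opt_matching_le:
  assumes "port_graph V nb"
  shows "2 * opt_matching V nb \<le> card V"
proof -
  have "is_matching V nb {}"
    by (simp add: is_matching_def)
  then have "opt_matching V nb \<in> {card M | M. is_matching V nb M}"
    unfolding opt_matching_def using finite_matching_cards[OF assms] by (intro Max_in) auto
  then show ?thesis
    using two_card_matching_le[OF assms] by auto
qed

section \<open>The alternating output and its lifts\<close>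

text \<open>On the cycle of length m (m odd) this encodes the maximum matching {1,2}, {3,4}, ...,
  {m-2,m-1}; on a cycle whose length is a multiple of m it is the lift of that matching.\<close>

definition alternating_output :: "nat \<Rightarrow> nat \<Rightarrow> nat option" where
  "alternating_output m v =
     (if v mod m = 0 then None else if odd (v mod m) then Some 1 else Some 0)"

lemma alternating_output_mod: "alternating_output m (v mod m) = alternating_output m v"
  by (simp add: alternating_output_def)

lemma Suc_odd_residue:
  assumes "odd m" "m dvd N" "v < N" "odd (v mod m)"
  shows "Suc v < N" "Suc v mod m = Suc (v mod m)"
proof -
  have "v mod m < m"
    using odd_pos[OF assms(1)] by simp
  then have "Suc (v mod m) < m"
    using assms(1,4) by (metis Suc_lessI even_Suc)
  then show mod: "Suc v mod m = Suc (v mod m)"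
    by (simp add: mod_Suc)
  show "Suc v < N"
  proof (rule ccontr)
    assume "\<not> Suc v < N"
    then have "Suc v = N" using assms(3) by simp
    then show False using mod assms(2) by simp
  qed
qed

lemma alternating_matched_edges:
  assumes m: "odd m" "m dvd N"
  shows "{{v, cycle_nbrs N v ! p} | v p. v \<in> {0..<N} \<and> alternating_output m v = Some p} =
         (\<lambda>v. {v, Suc v}) ` {v. v < N \<and> odd (v mod m)}"
proof (intro set_eqI iffI)
  fix e assume "e \<in> {{v, cycle_nbrs N v ! p} | v p. v \<in> {0..<N} \<and> alternating_output m v = Some p}"
  then obtain v p where e: "e = {v, cycle_nbrs N v ! p}" "v < N" "alternating_output m v = Some p"
    by auto
  show "e \<in> (\<lambda>v. {v, Suc v}) ` {v. v < N \<and> odd (v mod m)}"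
  proof (cases "odd (v mod m)")
    case True
    then have "p = 1"
      using e(3) by (auto simp: alternating_output_def split: if_splits)
    then have "e = {v, Suc v}"
      using e Suc_odd_residue[OF m e(2) True] by (simp add: cycle_nbrs_def cycle_succ_eq)
    then show ?thesis
      using True e(2) by (intro image_eqI[of _ _ v]) simp_all
  next
    case False
    then have nz: "v mod m \<noteq> 0" and "p = 0"
      using e(3) by (auto simp: alternating_output_def split: if_splits)
    then obtain u where v: "v = Suc u"
      by (cases v) auto
    then have "Suc u mod m = Suc (u mod m)"
      using nz by (simp add: mod_Suc split: if_splits)
    then have "odd (u mod m)"
      using False v by simp
    moreover have "e = {u, Suc u}"
      using e \<open>p = 0\<close> v by (simp add: cycle_nbrs_def cycle_pred_eq insert_commute)
    ultimately show ?thesis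
      using e(2) v by (intro image_eqI[of _ _ u]) simp_all
  qed
next
  fix e assume "e \<in> (\<lambda>v. {v, Suc v}) ` {v. v < N \<and> odd (v mod m)}"
  then obtain v where v: "v < N" "odd (v mod m)" "e = {v, Suc v}"
    by auto
  have "e = {v, cycle_nbrs N v ! 1}"
    using v Suc_odd_residue[OF m v(1,2)] by (simp add: cycle_nbrs_def cycle_succ_eq)
  moreover have "alternating_output m v = Some 1"
    using v(2) odd_pos[OF v(2)] by (simp add: alternating_output_def)
  ultimately show "e \<in> {{v, cycle_nbrs N v ! p} | v p. v \<in> {0..<N} \<and> alternating_output m v = Some p}"
    using v(1) by auto
qed

lemma card_consecutive_pairs: "card ((\<lambda>v. {v, Suc v}) ` S) = card S"
  by (rule card_image) (auto simp: inj_on_def doubleton_eq_iff)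

lemma matching_value_alternating:
  assumes "odd m" "m dvd N"
  shows "matching_value {0..<N} (cycle_nbrs N) (alternating_output m) =
           card {v. v < N \<and> odd (v mod m)}"
  unfolding matching_value_def alternating_matched_edges[OF assms] card_consecutive_pairs ..

lemma is_matching_consecutive_pairs:
  assumes "\<forall>v\<in>S. Suc v < N" "\<forall>v\<in>S. Suc v \<notin> S"
  shows "is_matching {0..<N} (cycle_nbrs N) ((\<lambda>v. {v, Suc v}) ` S)"
  unfolding is_matching_def
proof (intro conjI ballI impI subsetI)
  fix e assume "e \<in> (\<lambda>v. {v, Suc v}) ` S"
  then obtain v where v: "v \<in> S" "e = {v, Suc v}" by auto
  then have "v < N" "Suc v \<in> set (cycle_nbrs N v)"
    using assms(1) by (auto simp: cycle_nbrs_def cycle_succ_eq)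
  then show "e \<in> graph_edges {0..<N} (cycle_nbrs N)"
    unfolding graph_edges_def using v(2) by auto
next
  fix e e' assume "e \<in> (\<lambda>v. {v, Suc v}) ` S" "e' \<in> (\<lambda>v. {v, Suc v}) ` S" "e \<noteq> e'"
  then show "e \<inter> e' = {}"
    using assms(2) by auto
qed

lemma card_odd_below: "card {v. v < n \<and> odd v} = n div 2"
proof -
  have "{v. v < n \<and> odd v} = (\<lambda>k. 2 * k + 1) ` {..<n div 2}"
    by (auto elim!: oddE)
  then show ?thesis
    by (simp add: card_image inj_on_def)
qed

lemma card_periodic_below:
  "card {v. v < k * m \<and> P (v mod m)} = k * card {u. u < m \<and> P u}"
proof (induction k)
  case (Suc k)
  have split: "{v. v < Suc k * m \<and> P (v mod m)} =
        {v. v < k * m \<and> P (v mod m)} \<union> (\<lambda>u. k * m + u) ` {u. u < m \<and> P u}"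
  proof (intro set_eqI iffI)
    fix v assume v: "v \<in> {v. v < Suc k * m \<and> P (v mod m)}"
    show "v \<in> {v. v < k * m \<and> P (v mod m)} \<union> (\<lambda>u. k * m + u) ` {u. u < m \<and> P u}"
    proof (cases "v < k * m")
      case False
      define u where "u = v - k * m"
      have "v = k * m + u" "u < m"
        using False v by (auto simp: u_def)
      then show ?thesis
        using v by auto
    qed (use v in auto)
  qed auto
  have "card ((\<lambda>u. k * m + u) ` {u. u < m \<and> P u}) = card {u. u < m \<and> P u}"
    by (simp add: card_image)
  then show ?case
    unfolding split using Suc.IH by (subst card_Un_disjoint) auto
qed simp

lemma is_matching_alternating:
  assumes "odd m" "m dvd N"
  shows "is_matching {0..<N} (cycle_nbrs N) ((\<lambda>v. {v, Suc v}) ` {v. v < N \<and> odd (v mod m)})"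
  using Suc_odd_residue[OF assms] by (intro is_matching_consecutive_pairs) auto

lemma encodes_alternating_odd_cycle:
  assumes "odd N"
  shows "encodes {0..<N} (cycle_nbrs N) (alternating_output N) ((\<lambda>v. {v, Suc v}) ` {v. v < N \<and> odd (v mod N)})"
    (is "encodes _ _ _ ?M")
  unfolding encodes_def
proof (intro conjI ballI)
  show "?M \<subseteq> graph_edges {0..<N} (cycle_nbrs N)"
    using is_matching_alternating[OF assms dvd_refl] by (simp add: is_matching_def)
  fix v assume v: "v \<in> {0..<N}"
  show "case alternating_output N v of
          None \<Rightarrow> \<forall>e\<in>?M. v \<notin> e
        | Some p \<Rightarrow> p < length (cycle_nbrs N v) \<and> {v, cycle_nbrs N v ! p} \<in> ?M"
  proof (cases "alternating_output N v")
    case None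
    then have "v = 0"
      using v by (simp add: alternating_output_def split: if_splits)
    then show ?thesis
      using None by (auto intro: odd_pos)
  next
    case (Some p)
    then have "p < length (cycle_nbrs N v)"
      by (auto simp: alternating_output_def cycle_nbrs_def split: if_splits)
    moreover have "{v, cycle_nbrs N v ! p} \<in> ?M"
      unfolding alternating_matched_edges[OF assms dvd_refl, symmetric] using v Some by blast
    ultimately show ?thesis
      using Some by simp
  qed
qed

lemma yes_instance_odd_cycle:
  assumes "1 \<le> \<kappa>"
  defines "N \<equiv> 2 * \<kappa> + 1"
  shows "yes_instance \<kappa> {0..<N} (cycle_nbrs N) (alternating_output N)"
proof -
  define M where "M = (\<lambda>v. {v, Suc v}) ` {v. v < N \<and> odd (v mod N)}"
  have N: "odd N" "3 \<le> N"
    using assms by (auto simp: N_def)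
  have G: "port_graph {0..<N} (cycle_nbrs N)"
    using port_graph_cycle[OF N(2)] .
  have "{v. v < N \<and> odd (v mod N)} = {v. v < N \<and> odd v}"
    by auto
  then have card_M: "card M = \<kappa>"
    using card_odd_below[of N] by (simp add: M_def card_consecutive_pairs N_def)
  have "card M \<le> opt_matching {0..<N} (cycle_nbrs N)"
    unfolding M_def by (rule card_le_opt_matching[OF G is_matching_alternating[OF N(1) dvd_refl]])
  then have "opt_matching {0..<N} (cycle_nbrs N) = \<kappa>"
    using two_opt_matching_le[OF G] card_M by (simp add: N_def)
  moreover have "matching_value {0..<N} (cycle_nbrs N) (alternating_output N) = \<kappa>"
    using matching_value_alternating[OF N(1) dvd_refl] card_M
    by (simp add: M_def card_consecutive_pairs)
  ultimately show ?thesis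
    unfolding yes_instance_def feasible_matching_def in_universe_def
    using G odd_girth_cycle[of N] encodes_alternating_odd_cycle[OF N(1)]
      is_matching_alternating[OF N(1) dvd_refl] by (auto simp: N_def)
qed

lemma no_instance_if_value_small:
  assumes "in_universe \<kappa> V nb"
    and "(\<kappa> + 1) * matching_value V nb out < \<kappa> * opt_matching V nb"
  shows "no_instance \<kappa> V nb out"
proof -
  have "0 < \<kappa>"
    using assms(2) by (cases \<kappa>) auto
  then have "real (matching_value V nb out) < real (opt_matching V nb) / ((real \<kappa> + 1) / real \<kappa>)"
    using assms(2) by (simp add: field_simps flip: of_nat_mult of_nat_Suc)
  then show ?thesis
    unfolding no_instance_def using assms(1) by simp
qed

lemma no_instance_doubled_cycle:
  assumes m: "odd m" "3 \<le> m" "m \<le> \<kappa>"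
  shows "no_instance \<kappa> {0..<2 * m} (cycle_nbrs (2 * m)) (alternating_output m)"
proof (rule no_instance_if_value_small)
  show "in_universe \<kappa> {0..<2 * m} (cycle_nbrs (2 * m))"
    unfolding in_universe_def using m port_graph_cycle[of "2 * m"] odd_girth_even_cycle[of "2 * m"] by simp
  have lifted_value: "matching_value {0..<2 * m} (cycle_nbrs (2 * m)) (alternating_output m) = m - 1"
    using matching_value_alternating[of m "2 * m"] card_periodic_below[of 2 m odd] card_odd_below[of m] m
    by simp
  define PM where "PM = (\<lambda>v. {v, Suc v}) ` {v. v < 2 * m \<and> even v}"
  have "card PM = m"
  proof -
    have "{v. v < 2 * m \<and> even v} = (\<lambda>k. 2 * k) ` {..<m}"
      by (auto elim!: evenE)
    then show ?thesis
      unfolding PM_def card_consecutive_pairs by (simp add: card_image inj_on_def)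
  qed
  moreover have "is_matching {0..<2 * m} (cycle_nbrs (2 * m)) PM"
    unfolding PM_def by (intro is_matching_consecutive_pairs) (auto elim!: evenE)
  ultimately have opt: "m \<le> opt_matching {0..<2 * m} (cycle_nbrs (2 * m))"
    using card_le_opt_matching port_graph_cycle m by fastforce
  have "(\<kappa> + 1) * (m - 1) < \<kappa> * m"
    using m by (cases m) auto
  also have "\<dots> \<le> \<kappa> * opt_matching {0..<2 * m} (cycle_nbrs (2 * m))"
    using opt by simp
  finally show "(\<kappa> + 1) * matching_value {0..<2 * m} (cycle_nbrs (2 * m)) (alternating_output m)
      < \<kappa> * opt_matching {0..<2 * m} (cycle_nbrs (2 * m))"
    unfolding lifted_value .
qed

section \<open>Transforming accepted cycles\<close>

lemma cycle_succ_mod: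
  assumes "m dvd N"
  shows "cycle_succ N v mod m = cycle_succ m (v mod m)"
  using assms by (simp add: cycle_succ_def mod_mod_cancel mod_Suc_eq)

lemma cycle_pred_mod:
  assumes "m dvd N" "0 < N"
  shows "cycle_pred N v mod m = cycle_pred m (v mod m)"
proof -
  obtain k where k: "N = Suc k * m"
    using assms by (metis dvd_def mult.commute mult_0_right not0_implies_Suc neq0_conv)
  then have "0 < m"
    using assms(2) by (cases m) auto
  have "v + (N - 1) = v + (m - 1) + k * m"
    using k \<open>0 < m\<close> by simp
  then have "(v + (N - 1)) mod m = (v + (m - 1)) mod m"
    by (metis mod_mult_self1)
  then show ?thesis
    using assms(1) by (simp add: cycle_pred_def mod_mod_cancel mod_add_left_eq)
qed

lemma verifier_accepts_cycle_cover:
  assumes acc: "accepts_on_cycle D m out L" and "m dvd N" "0 < N"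
  shows "accepts_on_cycle D N (\<lambda>v. out (v mod m)) (\<lambda>v. L (v mod m))"
  unfolding verifier_accepts_cycle
proof (intro allI impI)
  fix v assume "v < N"
  have "0 < m"
    using assms(2,3) by (auto intro: Nat.gr0I)
  then have "D (out (v mod m)) (L (v mod m)) [L (cycle_pred m (v mod m)), L (cycle_succ m (v mod m))]"
    using acc by (simp add: verifier_accepts_cycle)
  then show "D (out (v mod m)) (L (v mod m)) [L (cycle_pred N v mod m), L (cycle_succ N v mod m)]"
    using assms(2,3) by (simp add: cycle_pred_mod cycle_succ_mod)
qed

text \<open>After removing the segment i+1..j every node sees exactly what some node of the
  original cycle saw: the label pairs at the seam agree, and the even length of the removed
  segment preserves the output pattern.\<close>

lemma verifier_accepts_cycle_cut:
  assumes acc: "accepts_on_cycle D n (alternating_output n) L"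
    and ij: "i < j" "even (j - i)" "Suc j < n"
    and eq: "L i = L j" "L (Suc i) = L (Suc j)"
  shows "accepts_on_cycle D (n - (j - i)) (alternating_output (n - (j - i)))
           (\<lambda>v. if v \<le> i then L v else L (v + (j - i)))"
  unfolding verifier_accepts_cycle
proof (intro allI impI)
  define d where "d = j - i"
  define L' where "L' = (\<lambda>v. if v \<le> i then L v else L (v + d))"
  fix v assume v: "v < n - (j - i)"
  define w where "w = (if v \<le> i then v else v + d)"
  have w: "w < n"
    using v ij unfolding w_def d_def by auto
  have "alternating_output (n - d) v = alternating_output n w"
    using v w ij unfolding w_def d_def by (auto simp: alternating_output_def)
  moreover have "L' v = L w"
    by (simp add: L'_def w_def)
  moreover have "L' (cycle_pred (n - d) v) = L (cycle_pred n w)"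
    using v w ij eq unfolding L'_def w_def d_def
    by (cases "v = Suc i") (auto simp: cycle_pred_eq)
  moreover have "L' (cycle_succ (n - d) v) = L (cycle_succ n w)"
    using v w ij eq unfolding L'_def w_def d_def
    by (cases "v = i") (auto simp: cycle_succ_eq Suc_diff_le)
  moreover have "D (alternating_output n w) (L w) [L (cycle_pred n w), L (cycle_succ n w)]"
    using acc w by (simp add: verifier_accepts_cycle)
  ultimately show "D (alternating_output (n - (j - i)) v) (L' v)
      [L' (cycle_pred (n - (j - i)) v), L' (cycle_succ (n - (j - i)) v)]"
    unfolding d_def by simp
qed

lemma pigeonhole_label_pairs:
  assumes "finite S" "card S ^ 2 < h" "\<And>k. k < h \<Longrightarrow> (L (2 * k), L (Suc (2 * k))) \<in> S \<times> S"
  shows "\<exists>k l. k < l \<and> l < h \<and> L (2 * k) = L (2 * l) \<and> L (Suc (2 * k)) = L (Suc (2 * l))"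
proof -
  define f where "f k = (L (2 * k), L (Suc (2 * k)))" for k
  have "\<not> inj_on f {..<h}"
  proof
    assume "inj_on f {..<h}"
    then have "card {..<h} \<le> card (S \<times> S)"
      using assms(1,3) by (intro card_inj_on_le) (auto simp: f_def)
    then show False
      using assms(2) by (simp add: card_cartesian_product power2_eq_square)
  qed
  then obtain k l where "k < h" "l < h" "k \<noteq> l" "f k = f l"
    unfolding inj_on_def by blast
  then show ?thesis
    unfolding f_def by (metis linorder_neqE_nat prod.inject)
qed

lemma accepted_odd_cycle_shrink:
  assumes "finite S"
  shows "odd n \<Longrightarrow> 3 \<le> n \<Longrightarrow> accepts_on_cycle D n (alternating_output n) L \<Longrightarrow> L ` {0..<n} \<subseteq> S \<Longrightarrow>
    \<exists>n' L'. odd n' \<and> 3 \<le> n' \<and> n' \<le> 2 * card S ^ 2 + 1 \<and> accepts_on_cycle D n' (alternating_output n') L'"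
proof (induction n arbitrary: L rule: less_induct)
  case (less n)
  show ?case
  proof (cases "n \<le> 2 * card S ^ 2 + 1")
    case False
    obtain h where h: "n = 2 * h + 1"
      using less.prems(1) by (metis oddE)
    then have "card S ^ 2 < h"
      using False by simp
    then obtain k l where kl: "k < l" "l < h" "L (2 * k) = L (2 * l)" "L (Suc (2 * k)) = L (Suc (2 * l))"
      using pigeonhole_label_pairs[OF assms, of h L] less.prems(4) h by fastforce
    define d where "d = 2 * l - 2 * k"
    have "accepts_on_cycle D (n - d) (alternating_output (n - d))
            (\<lambda>v. if v \<le> 2 * k then L v else L (v + d))"
      unfolding d_def using kl h by (intro verifier_accepts_cycle_cut less.prems(3)) auto
    moreover have "n - d < n" "odd (n - d)" "3 \<le> n - d"
      using kl h unfolding d_def by auto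
    moreover have "(\<lambda>v. if v \<le> 2 * k then L v else L (v + d)) ` {0..<n - d} \<subseteq> S"
      using less.prems(4) by (auto intro!: imageI)
    ultimately show ?thesis
      using less.IH by blast
  qed (use less.prems in blast)
qed

lemma APLS_rejects_short_odd_cycle:
  assumes "is_APLS \<kappa> P D" "odd m" "3 \<le> m" "m \<le> \<kappa>"
  shows "\<not> accepts_on_cycle D m (alternating_output m) L"
proof
  assume "accepts_on_cycle D m (alternating_output m) L"
  from verifier_accepts_cycle_cover[OF this, of "2 * m"]
  have "accepts_on_cycle D (2 * m) (alternating_output m) (\<lambda>v. L (v mod m))"
    using assms(3) by (simp add: alternating_output_mod)
  moreover have "no_instance \<kappa> {0..<2 * m} (cycle_nbrs (2 * m)) (alternating_output m)"
    using no_instance_doubled_cycle assms(2-4) .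
  ultimately show False
    using assms(1) unfolding is_APLS_def by blast
qed

lemma APLS_label_alphabet_bound:
  assumes "is_APLS \<kappa> P D" "1 \<le> \<kappa>" "finite S"
    and "P {0..<2 * \<kappa> + 1} (cycle_nbrs (2 * \<kappa> + 1)) (alternating_output (2 * \<kappa> + 1)) ` {0..<2 * \<kappa> + 1} \<subseteq> S"
  shows "\<kappa> \<le> 2 * card S ^ 2"
proof (rule ccontr)
  assume "\<not> \<kappa> \<le> 2 * card S ^ 2"
  have acc: "accepts_on_cycle D (2 * \<kappa> + 1) (alternating_output (2 * \<kappa> + 1))
          (P {0..<2 * \<kappa> + 1} (cycle_nbrs (2 * \<kappa> + 1)) (alternating_output (2 * \<kappa> + 1)))"
    using assms(1) yes_instance_odd_cycle[OF assms(2)] unfolding is_APLS_def by blast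
  have "odd (2 * \<kappa> + 1)" "3 \<le> 2 * \<kappa> + 1"
    using assms(2) by auto
  then obtain n L where "odd n" "3 \<le> n" "n \<le> 2 * card S ^ 2 + 1"
    and "accepts_on_cycle D n (alternating_output n) L"
    using accepted_odd_cycle_shrink[OF assms(3) _ _ acc assms(4)] by blast
  moreover have "n \<le> \<kappa>"
    using \<open>n \<le> 2 * card S ^ 2 + 1\<close> \<open>\<not> \<kappa> \<le> 2 * card S ^ 2\<close> by simp
  ultimately show False
    using APLS_rejects_short_odd_cycle[OF assms(1)] by blast
qed

lemma card_bounded_bool_lists: "card {xs :: bool list. length xs \<le> b} < 2 ^ Suc b"
proof -
  have "card {xs :: bool list. length xs \<le> b} = (\<Sum>i\<le>b. 2 ^ i)"
    using card_lists_length_le[of "UNIV :: bool set" b] by simp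
  also have "\<dots> < 2 ^ Suc b"
    by (induction b) auto
  finally show ?thesis .
qed

lemma APLS_label_length_bound:
  assumes "is_APLS \<kappa> P D" "1 \<le> \<kappa>"
    and "\<And>v. v < 2 * \<kappa> + 1 \<Longrightarrow>
           length (P {0..<2 * \<kappa> + 1} (cycle_nbrs (2 * \<kappa> + 1)) (alternating_output (2 * \<kappa> + 1)) v) \<le> b"
  shows "\<kappa> \<le> 8 * 4 ^ b"
proof -
  have "finite {xs :: bool list. length xs \<le> b}"
    using finite_lists_length_le[of "UNIV :: bool set" b] by simp
  moreover have "P {0..<2 * \<kappa> + 1} (cycle_nbrs (2 * \<kappa> + 1)) (alternating_output (2 * \<kappa> + 1))
      ` {0..<2 * \<kappa> + 1} \<subseteq> {xs. length xs \<le> b}"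
    using assms(3) by auto
  ultimately have "\<kappa> \<le> 2 * card {xs :: bool list. length xs \<le> b} ^ 2"
    by (rule APLS_label_alphabet_bound[OF assms(1,2)])
  also have "\<dots> \<le> 2 * (2 ^ Suc b) ^ 2"
    using less_imp_le[OF card_bounded_bool_lists] by (intro mult_le_mono2 power_mono) auto
  also have "\<dots> = 8 * 4 ^ b"
    by (simp add: power_mult_distrib power_mult[symmetric] mult.commute[of _ 2] power_mult)
  finally show ?thesis .
qed

lemma ln_le_of_le_8_mul_4_pow:
  assumes "k \<le> 8 * 4 ^ b" "1 \<le> b" "0 < k"
  shows "ln (real k) \<le> 5 * real b"
proof -
  have "real k \<le> real (8 * 4 ^ b)"
    using assms(1) by (simp only: of_nat_le_iff)
  also have "\<dots> = 8 * 4 ^ b"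
    by simp
  also have "(8::real) * 4 ^ b = 2 ^ (2 * b + 3)"
    by (simp add: power_add power_mult)
  also have "\<dots> \<le> 2 ^ (5 * b)"
    using assms(2) by (intro power_increasing) auto
  finally have "ln (real k) \<le> ln (2 ^ (5 * b))"
    using assms(3) by simp
  also have "\<dots> = real (5 * b) * ln 2"
    by (rule ln_realpow)
  also have "\<dots> \<le> real (5 * b)"
    using ln_2_less_1 by (intro mult_left_le) auto
  finally show ?thesis by simp
qed

theorem theorem5p17:
  shows "\<exists>c > 0. \<exists>\<kappa>0. \<forall>\<kappa> \<ge> \<kappa>0. \<forall>P D. is_APLS \<kappa> P D \<longrightarrow>
           (\<exists>V nb out v. yes_instance \<kappa> V nb out \<and> v \<in> V \<and>
              real (length (P V nb out v)) \<ge> c * ln (real \<kappa>))"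
proof (intro exI[of _ "1/5 :: real"] conjI exI[of _ "9 :: nat"] allI impI)
  fix \<kappa> :: nat and P D
  assume \<kappa>: "9 \<le> \<kappa>" and APLS: "is_APLS \<kappa> P D"
  define N where "N = 2 * \<kappa> + 1"
  define L where "L = P {0..<N} (cycle_nbrs N) (alternating_output N)"
  have "Max (length ` L ` {0..<N}) \<in> length ` L ` {0..<N}"
    unfolding N_def by (intro Max_in) auto
  then obtain v where v: "v < N" "length (L v) = Max (length ` L ` {0..<N})"
    by auto
  then have bound: "\<kappa> \<le> 8 * 4 ^ length (L v)"
    using APLS_label_length_bound[OF APLS] \<kappa> unfolding L_def N_def by simp
  moreover have "1 \<le> length (L v)"
    using bound \<kappa> by (cases "length (L v)") auto
  ultimately have "ln (real \<kappa>) \<le> 5 * real (length (L v))"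
    using \<kappa> by (intro ln_le_of_le_8_mul_4_pow) auto
  moreover have "yes_instance \<kappa> {0..<N} (cycle_nbrs N) (alternating_output N)"
    using yes_instance_odd_cycle \<kappa> unfolding N_def by simp
  ultimately show "\<exists>V nb out v. yes_instance \<kappa> V nb out \<and> v \<in> V \<and>
      real (length (P V nb out v)) \<ge> 1/5 * ln (real \<kappa>)"
    using v(1) unfolding L_def by fastforce
qed simp

end
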